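(* Let $K\ge 1$ be an integer, $\mathcal{I}=\{1,\dots,K\}$, and let $\lambda_i>0$, $\gamma_{ui}>0$, $\gamma_{di}>0$ ($i\in\mathcal{I}$), $\gamma_u>0$, $\gamma_d>0$ be given, together with asset proportions $m_i>0$ ($i\in\mathcal{I}$) satisfying $\sum_{i\in\mathcal{I}} m_i<1$. Let $E=\{(h,n),(l,n)\}\cup\{(hi,o),(li,o): i\in\mathcal{I}\}$. Then there exists a unique function $\mu:E\to[0,\infty)$ (a steady state of the non-segmented market) satisfying \[0=-\mu(h,n)\sum_{i\in\mathcal{I}}\lambda_i\mu(li,o)+\gamma_u\mu(l,n)-\gamma_d\mu(h,n),\] \[0=-\lambda_i\mu(h,n)\mu(li,o)-\gamma_{ui}\mu(li,o)+\gamma_{di}\mu(hi,o)\quad\text{for all } i\in\mathcal{I},\] together with the constraints \[\mu(hi,o)+\mu(li,o)=m_i\ \ (i\in\mathcal{I}),\qquad \sum_{i\in\mathcal{I}}m_i+\mu(h,n)+\mu(l,n)=1.\]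
   Context: This is the stationary version of the non-segmented over-the-counter market model: $\mu(z)$ is the proportion of investors in state $z\in E$, where $(h,n)$/$(l,n)$ denote high/low liquidity-type investors owning no asset and $(hi,o)$/$(li,o)$ denote high/low-type investors owning asset $i$. The time-dependent dynamics are $\dot\mu_t(h,n)=-\mu_t(h,n)\sum_i\lambda_i\mu_t(li,o)+\gamma_u\mu_t(l,n)-\gamma_d\mu_t(h,n)$ and $\dot\mu_t(li,o)=-\lambda_i\mu_t(h,n)\mu_t(li,o)-\gamma_{ui}\mu_t(li,o)+\gamma_{di}\mu_t(hi,o)$ under the stated constraints; a steady state is a solution with zero time derivative. *)

theory Defs
  imports "HOL-Analysis.Analysis" "HOL-Library.FuncSet"
begin

datatype state = HN | LN | HO nat | LO nat

definition states :: "nat \<Rightarrow> state set" where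
  "states K = {HN, LN} \<union> HO ` {1..K} \<union> LO ` {1..K}"

definition steady_state ::
  "nat \<Rightarrow> (nat \<Rightarrow> real) \<Rightarrow> (nat \<Rightarrow> real) \<Rightarrow> (nat \<Rightarrow> real) \<Rightarrow> real \<Rightarrow> real
   \<Rightarrow> (nat \<Rightarrow> real) \<Rightarrow> (state \<Rightarrow> real) \<Rightarrow> bool" where
  "steady_state K lam gu_i gd_i gu gd m \<mu> \<longleftrightarrow>
     \<mu> \<in> extensional (states K) \<and>
     (\<forall>z\<in>states K. 0 \<le> \<mu> z) \<and>
     0 = - \<mu> HN * (\<Sum>i\<in>{1..K}. lam i * \<mu> (LO i)) + gu * \<mu> LN - gd * \<mu> HN \<and>
     (\<forall>i\<in>{1..K}. 0 = - lam i * \<mu> HN * \<mu> (LO i) - gu_i i * \<mu> (LO i) + gd_i i * \<mu> (HO i)) \<and>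
     (\<forall>i\<in>{1..K}. \<mu> (HO i) + \<mu> (LO i) = m i) \<and>
     (\<Sum>i\<in>{1..K}. m i) + \<mu> HN + \<mu> LN = 1"

end

theory Submission
  imports Defs
begin

text \<open>Once \<open>y = \<mu>(h,n)\<close> is fixed, the balance equation of asset \<open>i\<close> together with
  \<open>\<mu>(hi,o) + \<mu>(li,o) = m\<^sub>i\<close> is linear in \<open>\<mu>(li,o)\<close> and determines it, and the supply
  constraint determines \<open>\<mu>(l,n) = 1 - \<Sum>m\<^sub>i - y\<close>. Substituting into the balance equation of
  \<open>(h,n)\<close> leaves one scalar equation \<open>F y = 0\<close> (\<open>F\<close> is the net outflow from \<open>(h,n)\<close>), where \<open>F\<close> is continuous and strictly increasing
  on \<open>[0,\<infinity>)\<close> with \<open>F 0 \<le> 0 \<le> F (1 - \<Sum>m\<^sub>i)\<close>. The intermediate value theorem gives a root,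
  monotonicity makes it unique, and the root yields a nonnegative steady state.\<close>

lemma states_mem [simp]:
  "HN \<in> states K" "LN \<in> states K"
  "HO i \<in> states K \<longleftrightarrow> i \<in> {1..K}" "LO i \<in> states K \<longleftrightarrow> i \<in> {1..K}"
  by (auto simp: states_def)

lemma divide_add_const_mono:
  fixes a b c :: real
  assumes "0 \<le> a" "a \<le> b" "0 < c"
  shows "a / (a + c) \<le> b / (b + c)"
proof -
  have "a * (b + c) \<le> b * (a + c)"
    using assms by (simp add: algebra_simps mult_right_mono)
  then show ?thesis
    using assms by (simp add: divide_simps)
qed

locale otc_market =
  fixes K :: nat and lam gu_i gd_i m :: "nat \<Rightarrow> real" and gu gd :: real
  assumes lam_pos: "i \<in> {1..K} \<Longrightarrow> 0 < lam i"
    and gu_i_pos: "i \<in> {1..K} \<Longrightarrow> 0 < gu_i i"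
    and gd_i_pos: "i \<in> {1..K} \<Longrightarrow> 0 < gd_i i"
    and m_nonneg: "i \<in> {1..K} \<Longrightarrow> 0 \<le> m i"
    and gu_pos: "0 < gu"
    and gd_pos: "0 < gd"
    and supply_lt_1: "(\<Sum>i\<in>{1..K}. m i) < 1"
begin

definition asset_supply :: real
  where "asset_supply = (\<Sum>i\<in>{1..K}. m i)"

definition low_owners :: "real \<Rightarrow> nat \<Rightarrow> real"
  where "low_owners y i = gd_i i * m i / (lam i * y + (gu_i i + gd_i i))"

definition hn_net_outflow :: "real \<Rightarrow> real"
  where "hn_net_outflow y =
    y * (\<Sum>i\<in>{1..K}. lam i * low_owners y i) + gd * y - gu * (1 - asset_supply - y)"

definition steady_candidate :: "real \<Rightarrow> state \<Rightarrow> real"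
  where "steady_candidate y = restrict (\<lambda>z. case z of
      HN \<Rightarrow> y | LN \<Rightarrow> 1 - asset_supply - y | HO i \<Rightarrow> m i - low_owners y i | LO i \<Rightarrow> low_owners y i)
    (states K)"

lemma asset_supply_lt_one: "asset_supply < 1"
  using supply_lt_1 by (simp add: asset_supply_def)

lemma denominator_pos:
  assumes "i \<in> {1..K}" "0 \<le> y"
  shows "0 < lam i * y + (gu_i i + gd_i i)"
  using lam_pos[OF assms(1)] gu_i_pos[OF assms(1)] gd_i_pos[OF assms(1)] assms(2)
  by (simp add: add_nonneg_pos)

lemma low_owners_nonneg:
  assumes "i \<in> {1..K}" "0 \<le> y"
  shows "0 \<le> low_owners y i"
  using denominator_pos[OF assms] gd_i_pos[OF assms(1)] m_nonneg[OF assms(1)]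
  by (simp add: low_owners_def)

lemma low_owners_le:
  assumes "i \<in> {1..K}" "0 \<le> y"
  shows "low_owners y i \<le> m i"
proof -
  have "gd_i i * m i \<le> m i * (lam i * y + (gu_i i + gd_i i))"
    using lam_pos[OF assms(1)] gu_i_pos[OF assms(1)] m_nonneg[OF assms(1)] assms(2)
    by (simp add: algebra_simps)
  then show ?thesis
    using denominator_pos[OF assms] by (simp add: low_owners_def divide_simps)
qed

lemma low_owners_balance:
  assumes "i \<in> {1..K}" "0 \<le> y"
  shows "0 = - lam i * y * low_owners y i - gu_i i * low_owners y i
             + gd_i i * (m i - low_owners y i)"
proof -
  have "low_owners y i * (lam i * y + (gu_i i + gd_i i)) = gd_i i * m i"
    using denominator_pos[OF assms] by (simp add: low_owners_def)
  then show ?thesis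
    by (simp add: algebra_simps)
qed

lemma low_owners_unique:
  assumes "i \<in> {1..K}" "0 \<le> y" "h + l = m i"
    and "0 = - lam i * y * l - gu_i i * l + gd_i i * h"
  shows "l = low_owners y i"
proof -
  have "l * (lam i * y + (gu_i i + gd_i i)) = gd_i i * (h + l)"
    using assms(4) by (simp add: algebra_simps)
  then have "l * (lam i * y + (gu_i i + gd_i i)) = gd_i i * m i"
    using assms(3) by simp
  then show ?thesis
    using denominator_pos[OF assms(1,2)] by (simp add: low_owners_def field_simps)
qed

lemma hn_net_outflow_eq:
  assumes "0 \<le> y"
  shows "hn_net_outflow y =
    (\<Sum>i\<in>{1..K}. gd_i i * m i * (lam i * y / (lam i * y + (gu_i i + gd_i i))))
    + (gd + gu) * y - gu * (1 - asset_supply)"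
proof -
  have "y * (\<Sum>i\<in>{1..K}. lam i * low_owners y i)
      = (\<Sum>i\<in>{1..K}. gd_i i * m i * (lam i * y / (lam i * y + (gu_i i + gd_i i))))"
    unfolding sum_distrib_left low_owners_def by (rule sum.cong) (auto simp: field_simps)
  then show ?thesis
    by (simp add: hn_net_outflow_def algebra_simps)
qed

lemma hn_net_outflow_strict_mono:
  assumes "0 \<le> a" "a < b"
  shows "hn_net_outflow a < hn_net_outflow b"
proof -
  have "(\<Sum>i\<in>{1..K}. gd_i i * m i * (lam i * a / (lam i * a + (gu_i i + gd_i i))))
      \<le> (\<Sum>i\<in>{1..K}. gd_i i * m i * (lam i * b / (lam i * b + (gu_i i + gd_i i))))"
  proof (rule sum_mono)
    fix i assume i: "i \<in> {1..K}"
    have "lam i * a / (lam i * a + (gu_i i + gd_i i)) \<le> lam i * b / (lam i * b + (gu_i i + gd_i i))"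
      using lam_pos[OF i] gu_i_pos[OF i] gd_i_pos[OF i] assms
      by (intro divide_add_const_mono) auto
    then show "gd_i i * m i * (lam i * a / (lam i * a + (gu_i i + gd_i i)))
             \<le> gd_i i * m i * (lam i * b / (lam i * b + (gu_i i + gd_i i)))"
      using gd_i_pos[OF i] m_nonneg[OF i] by (intro mult_left_mono) auto
  qed
  moreover have "(gd + gu) * a < (gd + gu) * b"
    using assms gd_pos gu_pos by simp
  ultimately show ?thesis
    using assms by (simp add: hn_net_outflow_eq)
qed

lemma hn_net_outflow_root_unique:
  assumes "0 \<le> a" "0 \<le> b" "hn_net_outflow a = 0" "hn_net_outflow b = 0"
  shows "a = b"
  using hn_net_outflow_strict_mono[of a b] hn_net_outflow_strict_mono[of b a] assms
  by (cases a b rule: linorder_cases) auto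

lemma hn_net_outflow_root_exists:
  obtains y where "0 \<le> y" "y \<le> 1 - asset_supply" "hn_net_outflow y = 0"
proof -
  have "lam i * x + (gu_i i + gd_i i) \<noteq> 0" if "i \<in> {1..K}" "x \<in> {0..1 - asset_supply}" for i x
    using denominator_pos[of i x] that by auto
  then have "continuous_on {0..1 - asset_supply} hn_net_outflow"
    unfolding hn_net_outflow_def low_owners_def by (intro continuous_intros) auto
  moreover have "hn_net_outflow 0 \<le> 0"
    using asset_supply_lt_one gu_pos by (simp add: hn_net_outflow_def)
  moreover have "0 \<le> hn_net_outflow (1 - asset_supply)"
  proof -
    have "0 \<le> (\<Sum>i\<in>{1..K}. lam i * low_owners (1 - asset_supply) i)"
      using asset_supply_lt_one
      by (intro sum_nonneg mult_nonneg_nonneg) (auto intro: low_owners_nonneg less_imp_le[OF lam_pos])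
    then show ?thesis
      using asset_supply_lt_one gd_pos by (simp add: hn_net_outflow_def)
  qed
  ultimately show ?thesis
    using IVT'[of hn_net_outflow 0 0 "1 - asset_supply"] asset_supply_lt_one that by auto
qed

lemma steady_candidate_steady_state:
  assumes "0 \<le> y" "y \<le> 1 - asset_supply" "hn_net_outflow y = 0"
  shows "steady_state K lam gu_i gd_i gu gd m (steady_candidate y)"
proof -
  let ?\<mu> = "steady_candidate y"
  have "0 \<le> ?\<mu> z" if "z \<in> states K" for z
    using that assms low_owners_nonneg low_owners_le
    by (cases z) (auto simp: steady_candidate_def)
  moreover have "(\<Sum>i\<in>{1..K}. lam i * ?\<mu> (LO i)) = (\<Sum>i\<in>{1..K}. lam i * low_owners y i)"
    by (rule sum.cong) (auto simp: steady_candidate_def)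
  moreover have "0 = - lam i * ?\<mu> HN * ?\<mu> (LO i) - gu_i i * ?\<mu> (LO i) + gd_i i * ?\<mu> (HO i)"
    if "i \<in> {1..K}" for i
    using low_owners_balance[OF that assms(1)] that by (simp add: steady_candidate_def)
  moreover have "0 = - ?\<mu> HN * (\<Sum>i\<in>{1..K}. lam i * low_owners y i) + gu * ?\<mu> LN - gd * ?\<mu> HN"
    using assms(3) by (simp add: steady_candidate_def hn_net_outflow_def algebra_simps)
  ultimately show ?thesis
    unfolding steady_state_def
    by (auto simp: steady_candidate_def asset_supply_def)
qed

lemma steady_state_eq_candidate:
  assumes "steady_state K lam gu_i gd_i gu gd m \<mu>"
  shows "0 \<le> \<mu> HN" "hn_net_outflow (\<mu> HN) = 0" "\<mu> = steady_candidate (\<mu> HN)"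
proof -
  note ss = assms[unfolded steady_state_def]
  show hn: "0 \<le> \<mu> HN"
    using ss by auto
  have ln: "\<mu> LN = 1 - asset_supply - \<mu> HN"
    using ss by (auto simp: asset_supply_def)
  have lo: "\<mu> (LO i) = low_owners (\<mu> HN) i" and ho: "\<mu> (HO i) = m i - low_owners (\<mu> HN) i"
    if "i \<in> {1..K}" for i
  proof -
    have "\<mu> (HO i) + \<mu> (LO i) = m i"
      "0 = - lam i * \<mu> HN * \<mu> (LO i) - gu_i i * \<mu> (LO i) + gd_i i * \<mu> (HO i)"
      using ss that by auto
    then show lo: "\<mu> (LO i) = low_owners (\<mu> HN) i"
      using low_owners_unique[OF that hn] by simp
    show "\<mu> (HO i) = m i - low_owners (\<mu> HN) i"
      using \<open>\<mu> (HO i) + \<mu> (LO i) = m i\<close> lo by simp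
  qed
  have "(\<Sum>i\<in>{1..K}. lam i * \<mu> (LO i)) = (\<Sum>i\<in>{1..K}. lam i * low_owners (\<mu> HN) i)"
    using lo by simp
  then show "hn_net_outflow (\<mu> HN) = 0"
    using ss ln by (simp add: hn_net_outflow_def algebra_simps)
  show "\<mu> = steady_candidate (\<mu> HN)"
  proof (rule extensionalityI[of _ "states K"])
    show "\<mu> \<in> extensional (states K)"
      using ss by blast
    show "\<mu> z = steady_candidate (\<mu> HN) z" if "z \<in> states K" for z
      using that ln lo ho by (cases z) (auto simp: steady_candidate_def)
  qed (simp add: steady_candidate_def)
qed

theorem steady_state_ex1: "\<exists>!\<mu>. steady_state K lam gu_i gd_i gu gd m \<mu>"
proof -
  obtain y where y: "0 \<le> y" "y \<le> 1 - asset_supply" "hn_net_outflow y = 0"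
    by (rule hn_net_outflow_root_exists)
  show ?thesis
  proof (rule ex1I)
    show "steady_state K lam gu_i gd_i gu gd m (steady_candidate y)"
      using y by (rule steady_candidate_steady_state)
    fix \<nu> assume "steady_state K lam gu_i gd_i gu gd m \<nu>"
    note \<nu> = steady_state_eq_candidate[OF this]
    have "\<nu> HN = y"
      using hn_net_outflow_root_unique \<nu>(1,2) y(1,3) by blast
    then show "\<nu> = steady_candidate y"
      using \<nu>(3) by simp
  qed
qed

end

theorem proposition1:
  fixes K :: nat and lam gu_i gd_i m :: "nat \<Rightarrow> real" and gu gd :: real
  assumes "K \<ge> 1"
    and "\<forall>i\<in>{1..K}. lam i > 0 \<and> gu_i i > 0 \<and> gd_i i > 0 \<and> m i > 0"
    and "gu > 0" and "gd > 0"
    and "(\<Sum>i\<in>{1..K}. m i) < 1"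
  shows "\<exists>!\<mu>. steady_state K lam gu_i gd_i gu gd m \<mu>"
proof -
  interpret otc_market K lam gu_i gd_i m gu gd
    using assms(2-5) by unfold_locales (auto intro: less_imp_le)
  show ?thesis
    by (rule steady_state_ex1)
qed

end
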